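(* Let $X$ be a Minkowski space and let $A=\{\mathbf{x}_1,\dots,\mathbf{x}_{2k}\}\subset X$ be a $d$-collinear set of even size, listed in its natural order. Then \[\mathrm{FT}(A)=\bigcap_{i=1}^k[\mathbf{x}_i\mathbf{x}_{2k-i+1}]_d=[\mathbf{x}_k\mathbf{x}_{k+1}]_d.\]
   Context: A Minkowski space is a finite-dimensional real normed space $(X,\|\cdot\|)$. A metric line is a subset of $X$ isometric to $\mathbb{R}$; a set is $d$-collinear if it is contained in a metric line. A finite $d$-collinear set $\{\mathbf{x}_1,\dots,\mathbf{x}_m\}$ is listed in its natural order if there is an isometry $f$ from it onto a subset of $\mathbb{R}$ with $f(\mathbf{x}_1)<f(\mathbf{x}_2)<\dots<f(\mathbf{x}_m)$. The $d$-segment is $[\mathbf{x}\mathbf{y}]_d=\{\mathbf{z}: \|\mathbf{x}-\mathbf{z}\|+\|\mathbf{z}-\mathbf{y}\|=\|\mathbf{x}-\mathbf{y}\|\}$. $\mathrm{FT}(A)$ is the set of minimizers of $\mathbf{x}\mapsto\sum_{\mathbf{a}\in A}\|\mathbf{x}-\mathbf{a}\|$. *)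

theory Defs
  imports "HOL-Analysis.Analysis"
begin

definition minkowski_space :: "'a::real_normed_vector itself \<Rightarrow> bool" where
  "minkowski_space _ \<longleftrightarrow> (\<exists>B::'a set. finite B \<and> span B = UNIV)"

definition metric_line :: "'a::real_normed_vector set \<Rightarrow> bool" where
  "metric_line L \<longleftrightarrow> (\<exists>f::real \<Rightarrow> 'a. range f = L \<and>
       (\<forall>s t. norm (f s - f t) = \<bar>s - t\<bar>))"

definition d_collinear :: "'a::real_normed_vector set \<Rightarrow> bool" where
  "d_collinear S \<longleftrightarrow> (\<exists>L. metric_line L \<and> S \<subseteq> L)"

definition natural_order :: "(nat \<Rightarrow> 'a::real_normed_vector) \<Rightarrow> nat \<Rightarrow> bool" where
  "natural_order x m \<longleftrightarrow> (\<exists>g::'a \<Rightarrow> real.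
       (\<forall>i\<in>{1..m}. \<forall>j\<in>{1..m}. \<bar>g (x i) - g (x j)\<bar> = norm (x i - x j)) \<and>
       (\<forall>i\<in>{1..m}. \<forall>j\<in>{1..m}. i < j \<longrightarrow> g (x i) < g (x j)))"

definition d_segment :: "'a::real_normed_vector \<Rightarrow> 'a \<Rightarrow> 'a set" where
  "d_segment x y = {z. norm (x - z) + norm (z - y) = norm (x - y)}"

definition FT :: "'a::real_normed_vector set \<Rightarrow> 'a set" where
  "FT A = {x. \<forall>y. (\<Sum>a\<in>A. norm (x - a)) \<le> (\<Sum>a\<in>A. norm (y - a))}"

end

theory Submission
  imports Defs
begin

text \<open>Pair the points from the outside in: x i with x (2k-i+1). For each pair, the distance
  sum of z to its two points is at least their distance, with equality exactly on their
  d-segment. The natural order makes these segments nested, so their intersection is the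
  innermost segment; it is nonempty, hence the total distance sum attains the sum of the
  pair distances exactly on that intersection.\<close>

lemma mem_d_segment_iff:
  fixes a b z :: "'a::real_normed_vector"
  shows "z \<in> d_segment a b \<longleftrightarrow> norm (z - a) + norm (z - b) \<le> norm (a - b)"
proof -
  have "norm (a - b) \<le> norm (a - z) + norm (z - b)"
    by (rule norm_diff_triangle_le[OF order_refl order_refl])
  then show ?thesis
    unfolding d_segment_def by (auto simp: norm_minus_commute)
qed

lemma norm_diff_le_dist_sum:
  fixes a b z :: "'a::real_normed_vector"
  shows "norm (a - b) \<le> norm (z - a) + norm (z - b)"
  by (metis norm_diff_triangle_le norm_minus_commute order_refl)

lemma d_segment_subset:
  fixes a b c d :: "'a::real_normed_vector"
  assumes "c \<in> d_segment a b" and "d \<in> d_segment c b"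
  shows "d_segment c d \<subseteq> d_segment a b"
proof
  fix z assume "z \<in> d_segment c d"
  then have "norm (c - z) + norm (z - d) = norm (c - d)"
    by (simp add: d_segment_def)
  moreover have "norm (a - z) \<le> norm (a - c) + norm (c - z)"
    and "norm (z - b) \<le> norm (z - d) + norm (d - b)"
    and "norm (a - b) \<le> norm (a - z) + norm (z - b)"
    by (rule norm_diff_triangle_le[OF order_refl order_refl])+
  ultimately show "z \<in> d_segment a b"
    using assms by (simp add: d_segment_def)
qed

lemma FT_eq_Inter_d_segment:
  fixes A :: "'a::real_normed_vector set" and a b :: "'i \<Rightarrow> 'a"
  assumes "finite I"
    and pairing: "\<And>z. (\<Sum>p\<in>A. norm (z - p)) = (\<Sum>i\<in>I. norm (z - a i) + norm (z - b i))"
    and nonempty: "(\<Inter>i\<in>I. d_segment (a i) (b i)) \<noteq> {}"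
  shows "FT A = (\<Inter>i\<in>I. d_segment (a i) (b i))"
proof -
  define D where "D i = norm (a i - b i)" for i
  define N where "N z i = norm (z - a i) + norm (z - b i)" for z i
  have D_le_N: "D i \<le> N z i" for z i
    unfolding D_def N_def by (rule norm_diff_le_dist_sum)
  have sum_N_ge: "sum D I \<le> sum (N z) I" for z
    by (rule sum_mono) (rule D_le_N)
  have sum_N_eq: "sum (N z) I = sum D I" if "z \<in> (\<Inter>i\<in>I. d_segment (a i) (b i))" for z
    using that D_le_N by (intro sum.cong) (auto simp: mem_d_segment_iff D_def N_def intro: antisym)
  from nonempty obtain s where s: "s \<in> (\<Inter>i\<in>I. d_segment (a i) (b i))" by blast
  show ?thesis
  proof (intro equalityI subsetI)
    fix z assume "z \<in> FT A"
    then have "sum (N z) I \<le> sum (N s) I"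
      unfolding FT_def pairing N_def by blast
    with sum_N_eq[OF s] sum_N_ge[of z] have "sum (N z) I = sum D I" by linarith
    then have "N z i = D i" if "i \<in> I" for i
      using sum_mono_inv[of D I "N z" i] D_le_N that \<open>finite I\<close> by simp
    then show "z \<in> (\<Inter>i\<in>I. d_segment (a i) (b i))"
      by (simp add: mem_d_segment_iff D_def N_def)
  next
    fix z assume "z \<in> (\<Inter>i\<in>I. d_segment (a i) (b i))"
    then show "z \<in> FT A"
      using sum_N_eq sum_N_ge unfolding FT_def pairing N_def by simp
  qed
qed

lemma natural_order_mono:
  assumes "natural_order x m"
  obtains g where "\<And>i j. i \<in> {1..m} \<Longrightarrow> j \<in> {1..m} \<Longrightarrow> \<bar>g (x i) - g (x j)\<bar> = norm (x i - x j)"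
    and "\<And>i j. i \<in> {1..m} \<Longrightarrow> j \<in> {1..m} \<Longrightarrow> i \<le> j \<Longrightarrow> g (x i) \<le> g (x j)"
  using assms unfolding natural_order_def by (metis order_le_less)

lemma natural_order_inj_on:
  assumes "natural_order x m"
  shows "inj_on x {1..m}"
proof (rule inj_onI)
  fix i j assume "i \<in> {1..m}" "j \<in> {1..m}" "x i = x j"
  with assms show "i = j"
    unfolding natural_order_def by (metis less_irrefl nat_neq_iff)
qed

lemma natural_order_between:
  assumes "natural_order x m" and "1 \<le> i" "i \<le> j" "j \<le> l" "l \<le> m"
  shows "x j \<in> d_segment (x i) (x l)"
proof -
  obtain g where
    dist: "\<And>i j. i \<in> {1..m} \<Longrightarrow> j \<in> {1..m} \<Longrightarrow> \<bar>g (x i) - g (x j)\<bar> = norm (x i - x j)"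
    and mono: "\<And>i j. i \<in> {1..m} \<Longrightarrow> j \<in> {1..m} \<Longrightarrow> i \<le> j \<Longrightarrow> g (x i) \<le> g (x j)"
    using natural_order_mono[OF assms(1)] by blast
  have idx: "i \<in> {1..m}" "j \<in> {1..m}" "l \<in> {1..m}"
    using assms(2-5) by auto
  show ?thesis
    using dist[OF idx(1,2)] dist[OF idx(2,3)] dist[OF idx(1,3)]
      mono[OF idx(1,2)] mono[OF idx(2,3)] assms(3,4)
    unfolding d_segment_def by (simp add: norm_minus_commute)
qed

lemma natural_order_d_segments_nested:
  assumes "natural_order x (2*k)" and "i \<in> {1..k}"
  shows "d_segment (x k) (x (k+1)) \<subseteq> d_segment (x i) (x (2*k - i + 1))"
  using assms
  by (intro d_segment_subset natural_order_between[OF assms(1)]) auto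

lemma sum_symmetric_pairs:
  fixes h :: "nat \<Rightarrow> 'b::comm_monoid_add"
  shows "(\<Sum>i\<in>{1..2*k}. h i) = (\<Sum>i\<in>{1..k}. h i + h (2*k - i + 1))"
proof -
  have "{1..2*k} = {1..k} \<union> {k+1..2*k}" by auto
  then have "(\<Sum>i\<in>{1..2*k}. h i) = (\<Sum>i\<in>{1..k}. h i) + (\<Sum>i\<in>{k+1..2*k}. h i)"
    by (simp add: sum.union_disjoint)
  moreover have "(\<Sum>i\<in>{k+1..2*k}. h i) = (\<Sum>i\<in>{1..k}. h (2*k - i + 1))"
    by (rule sum.reindex_bij_witness[of _ "\<lambda>i. 2*k - i + 1" "\<lambda>i. 2*k - i + 1"]) auto
  ultimately show ?thesis by (simp add: sum.distrib)
qed

theorem corollary3p19: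
  fixes x :: "nat \<Rightarrow> 'a::real_normed_vector" and k :: nat
  assumes "minkowski_space TYPE('a)"
    and "k \<ge> 1"
    and "d_collinear (x ` {1..2*k})"
    and "natural_order x (2*k)"
  shows "FT (x ` {1..2*k}) = (\<Inter>i\<in>{1..k}. d_segment (x i) (x (2*k - i + 1)))
    \<and> (\<Inter>i\<in>{1..k}. d_segment (x i) (x (2*k - i + 1))) = d_segment (x k) (x (k+1))"
proof -
  have innermost: "(\<Inter>i\<in>{1..k}. d_segment (x i) (x (2*k - i + 1))) = d_segment (x k) (x (k+1))"
  proof
    show "(\<Inter>i\<in>{1..k}. d_segment (x i) (x (2*k - i + 1))) \<subseteq> d_segment (x k) (x (k+1))"
      using assms(2) by (auto dest!: bspec[of _ _ k])
    show "d_segment (x k) (x (k+1)) \<subseteq> (\<Inter>i\<in>{1..k}. d_segment (x i) (x (2*k - i + 1)))"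
      by (rule INT_greatest) (rule natural_order_d_segments_nested[OF assms(4)])
  qed
  have "x k \<in> d_segment (x k) (x (k+1))"
    by (simp add: d_segment_def)
  moreover have "(\<Sum>p\<in>x ` {1..2*k}. norm (z - p))
      = (\<Sum>i\<in>{1..k}. norm (z - x i) + norm (z - x (2*k - i + 1)))" for z
    unfolding sum.reindex[OF natural_order_inj_on[OF assms(4)], unfolded comp_def]
    by (rule sum_symmetric_pairs)
  ultimately have "FT (x ` {1..2*k}) = (\<Inter>i\<in>{1..k}. d_segment (x i) (x (2*k - i + 1)))"
    using innermost by (intro FT_eq_Inter_d_segment) auto
  with innermost show ?thesis by simp
qed

end
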